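(* For every $m\in\mathbb{N}$ and $\boldsymbol{X}\in\mathbb{N}^m$, writing $n_x:=m\widehat{\boldsymbol{\mu}}_m(x)$ for the number of occurrences of $x$ in $\boldsymbol{X}$, $$\hat{\mathfrak{R}}_m(\boldsymbol{X})=\frac1m\sum_{x:\,n_x>0}\frac{1}{2^{n_x}}\left\lceil\frac{n_x}{2}\right\rceil\binom{n_x}{\lceil n_x/2\rceil}.$$
   Context: $\widehat{\boldsymbol{\mu}}_m(i)=\frac1m\sum_{t=1}^m\mathbb{I}\{X_t=i\}$. $\hat{\mathfrak{R}}_m(\boldsymbol{X})=\mathbb{E}_{\boldsymbol{\sigma}}\big[\sup_{f:\mathbb{N}\to\{0,1\}}\frac1m\sum_{t=1}^m\sigma_tf(X_t)\big]$ with $\boldsymbol{\sigma}$ uniform on $\{-1,1\}^m$. *)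

theory Defs
  imports Complex_Main "HOL-Library.FuncSet"
begin

text \<open>A sample X \<in> \<nat>^m is a list of naturals of length m; positions are 0..<m.\<close>

definition emp_measure :: "nat list \<Rightarrow> nat \<Rightarrow> real" where
  "emp_measure X i = (1 / real (length X)) * (\<Sum>t<length X. if X ! t = i then 1 else 0)"

definition emp_rademacher :: "nat list \<Rightarrow> real" where
  "emp_rademacher X =
     (let m = length X;
          Sigmas = ({..<m} \<rightarrow>\<^sub>E ({-1, 1} :: real set))
      in (1 / real (card Sigmas)) *
         (\<Sum>\<sigma>\<in>Sigmas.
            Sup {(1 / real m) * (\<Sum>t<m. \<sigma> t * f (X ! t)) | f :: nat \<Rightarrow> real.
                   \<forall>x. f x \<in> {0, 1}}))"

end

theory Submission
  imports Defs
begin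

text \<open>For a fixed sign vector the supremum is attained by the indicator of the points whose signs
  sum to a positive value, so it equals the sum over the distinct points x of the positive part of
  the sum of the n_x signs sitting at the occurrences of x. Averaging over all sign vectors, each
  such sum is distributed like 2k - n_x with k binomial, and the expected positive part of that
  telescopes to a single central binomial term.\<close>

lemma sum_choose_Suc_split:
  fixes H :: "nat \<Rightarrow> 'a::comm_semiring_1"
  shows "(\<Sum>k\<le>Suc n. of_nat (Suc n choose k) * H k) =
    (\<Sum>k\<le>n. of_nat (n choose k) * H k) + (\<Sum>k\<le>n. of_nat (n choose k) * H (Suc k))"
proof -
  have "(\<Sum>k\<le>Suc n. of_nat (Suc n choose k) * H k) =
      H 0 + (\<Sum>k\<le>n. of_nat (n choose Suc k) * H (Suc k)) + (\<Sum>k\<le>n. of_nat (n choose k) * H (Suc k))"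
    by (subst sum.atMost_Suc_shift) (simp add: sum.distrib algebra_simps)
  also have "H 0 + (\<Sum>k\<le>n. of_nat (n choose Suc k) * H (Suc k)) = (\<Sum>k\<le>Suc n. of_nat (n choose k) * H k)"
    by (subst sum.atMost_Suc_shift) simp
  also have "\<dots> = (\<Sum>k\<le>n. of_nat (n choose k) * H k)"
    by (simp add: binomial_eq_0)
  finally show ?thesis .
qed

lemma sum_sign_vectors_binomial:
  assumes "finite A"
  shows "(\<Sum>\<sigma>\<in>A \<rightarrow>\<^sub>E {-1,1::real}. F (\<Sum>t\<in>A \<inter> T. \<sigma> t)) =
    2 ^ card (A - T) *
      (\<Sum>k\<le>card (A \<inter> T). real (card (A \<inter> T) choose k) * F (2 * real k - real (card (A \<inter> T))))"
  using assms
proof (induction A arbitrary: F rule: finite_induct)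
  case empty
  then show ?case by simp
next
  case (insert a A)
  let ?B = "{-1,1::real}"
  have "(\<Sum>\<sigma>\<in>insert a A \<rightarrow>\<^sub>E ?B. F (\<Sum>t\<in>insert a A \<inter> T. \<sigma> t)) =
      (\<Sum>p\<in>?B \<times> (A \<rightarrow>\<^sub>E ?B). F (\<Sum>t\<in>insert a A \<inter> T. ((snd p)(a := fst p)) t))"
    unfolding PiE_insert_eq
    by (subst sum.reindex) (use inj_combinator[OF insert(2)] in \<open>auto simp: case_prod_unfold\<close>)
  also have "\<dots> = (\<Sum>y\<in>?B. \<Sum>g\<in>A \<rightarrow>\<^sub>E ?B. F (\<Sum>t\<in>insert a A \<inter> T. (g(a := y)) t))"
    by (subst sum.cartesian_product) (simp add: case_prod_unfold)
  finally have split_a: "(\<Sum>\<sigma>\<in>insert a A \<rightarrow>\<^sub>E ?B. F (\<Sum>t\<in>insert a A \<inter> T. \<sigma> t)) =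
      (\<Sum>y\<in>?B. \<Sum>g\<in>A \<rightarrow>\<^sub>E ?B. F (\<Sum>t\<in>insert a A \<inter> T. (g(a := y)) t))" .
  have upd: "(\<Sum>t\<in>A \<inter> T. (g(a := y)) t) = (\<Sum>t\<in>A \<inter> T. g t)" for g and y :: real
    by (rule sum.cong) (use insert(2) in auto)
  show ?case
  proof (cases "a \<in> T")
    case True
    define n where "n = card (A \<inter> T)"
    have Int_eq: "insert a A \<inter> T = insert a (A \<inter> T)" and Diff_eq: "insert a A - T = A - T"
      using True by auto
    have card_Int: "card (insert a A \<inter> T) = Suc n"
      using insert(1,2) by (simp add: Int_eq n_def)
    have sum_upd: "(\<Sum>t\<in>insert a A \<inter> T. (g(a := y)) t) = y + (\<Sum>t\<in>A \<inter> T. g t)" for g and y :: real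
      unfolding Int_eq using insert(1,2) upd by simp
    have "(\<Sum>\<sigma>\<in>insert a A \<rightarrow>\<^sub>E ?B. F (\<Sum>t\<in>insert a A \<inter> T. \<sigma> t)) =
        (\<Sum>g\<in>A \<rightarrow>\<^sub>E ?B. F (-1 + (\<Sum>t\<in>A \<inter> T. g t))) + (\<Sum>g\<in>A \<rightarrow>\<^sub>E ?B. F (1 + (\<Sum>t\<in>A \<inter> T. g t)))"
      unfolding split_a sum_upd by simp
    also have "\<dots> = 2 ^ card (A - T) * ((\<Sum>k\<le>n. real (n choose k) * F (-1 + (2 * real k - real n)))
        + (\<Sum>k\<le>n. real (n choose k) * F (1 + (2 * real k - real n))))"
      using insert.IH[of "\<lambda>s. F (-1 + s)"] insert.IH[of "\<lambda>s. F (1 + s)"]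
      by (simp add: n_def algebra_simps)
    also have "(\<Sum>k\<le>n. real (n choose k) * F (-1 + (2 * real k - real n)))
        + (\<Sum>k\<le>n. real (n choose k) * F (1 + (2 * real k - real n)))
      = (\<Sum>k\<le>Suc n. real (Suc n choose k) * F (2 * real k - real (Suc n)))"
      by (subst sum_choose_Suc_split) (simp add: algebra_simps)
    finally show ?thesis
      by (simp add: card_Int Diff_eq)
  next
    case False
    have Int_eq: "insert a A \<inter> T = A \<inter> T" and Diff_eq: "insert a A - T = insert a (A - T)"
      using False by auto
    have "(\<Sum>\<sigma>\<in>insert a A \<rightarrow>\<^sub>E ?B. F (\<Sum>t\<in>insert a A \<inter> T. \<sigma> t)) =
        2 * (\<Sum>g\<in>A \<rightarrow>\<^sub>E ?B. F (\<Sum>t\<in>A \<inter> T. g t))"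
      unfolding split_a unfolding Int_eq upd by simp
    then show ?thesis
      using insert(1,2) insert.IH[of F] by (simp add: Int_eq Diff_eq)
  qed
qed

lemma sum_binomial_pos_part_telescope:
  assumes n: "n = Suc p"
  shows "(\<Sum>k\<le>n. real (n choose k) * max 0 (2 * real k - real n)) = real n * real (p choose (n div 2))"
proof -
  define q where "q = n div 2"
  define g where "g k = real (n choose k) * max 0 (2 * real k - real n)" for k
  have "{..n} = {..q} \<union> {Suc q..n}"
    by (auto simp: q_def)
  then have "(\<Sum>k\<le>n. g k) = (\<Sum>k\<le>q. g k) + (\<Sum>k=Suc q..n. g k)"
    by (simp add: sum.union_disjoint)
  also have "(\<Sum>k\<le>q. g k) = 0"
    by (rule sum.neutral) (auto simp: g_def q_def)
  also have "(\<Sum>k=Suc q..n. g k) = (\<Sum>i=q..p. g (Suc i))"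
    unfolding n by (rule sum.shift_bounds_cl_Suc_ivl)
  also have "\<dots> = (\<Sum>i=q..p. (- real n * real (p choose Suc i)) - (- real n * real (p choose i)))"
  proof (rule sum.cong)
    fix i assume i: "i \<in> {q..p}"
    have "real n * real (p choose i) = real (n choose Suc i) * real (Suc i)"
      using Suc_times_binomial_eq[of p i] n by (metis of_nat_mult)
    moreover have "real (n - Suc i) * real (n choose Suc i) = real n * real (p choose Suc i)"
      using binomial_absorb_comp[of n "Suc i"] n by (metis diff_Suc_1 of_nat_mult)
    moreover have "real (n - Suc i) = real p - real i"
      using i n by simp
    moreover have "2 * real (Suc i) - real n \<ge> 0"
      using i n by (auto simp: q_def)
    ultimately show "g (Suc i) = (- real n * real (p choose Suc i)) - (- real n * real (p choose i))"
      unfolding g_def using n by (simp add: algebra_simps)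
  qed simp
  also have "\<dots> = (- real n * real (p choose Suc p)) - (- real n * real (p choose q))"
    by (rule sum_Suc_diff) (auto simp: q_def n)
  also have "\<dots> = real n * real (p choose q)"
    by simp
  finally show ?thesis
    by (simp add: g_def q_def)
qed

lemma Suc_times_choose_half:
  assumes n: "n = Suc p"
  shows "n * (p choose (n div 2)) = (n + 1) div 2 * (n choose ((n + 1) div 2))"
proof (cases "even p")
  case True
  then obtain q where "p = 2 * q" by auto
  then show ?thesis using Suc_times_binomial_eq[of p q] n by simp
next
  case False
  then obtain q where p: "p = 2 * q + 1" using oddE by blast
  have "(n - Suc q) * (n choose Suc q) = n * (p choose Suc q)"
    using binomial_absorb_comp[of n "Suc q"] n by simp
  then show ?thesis using p n by simp
qed

lemma nat_ceiling_half: "nat \<lceil>real n / 2\<rceil> = (n + 1) div 2"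
proof (cases "even n")
  case True
  then show ?thesis by auto
next
  case False
  then obtain q where q: "n = 2 * q + 1" using oddE by blast
  have "\<lceil>real n / 2\<rceil> = int q + 1"
    by (rule ceiling_unique) (auto simp: q)
  then show ?thesis using q by simp
qed

lemma sum_binomial_pos_part:
  assumes "n > 0"
  shows "(\<Sum>k\<le>n. real (n choose k) * max 0 (2 * real k - real n)) =
    real (nat \<lceil>real n / 2\<rceil>) * real (n choose nat \<lceil>real n / 2\<rceil>)"
proof -
  obtain p where n: "n = Suc p" using assms gr0_implies_Suc by blast
  show ?thesis
    unfolding sum_binomial_pos_part_telescope[OF n] nat_ceiling_half
    using arg_cong[OF Suc_times_choose_half[OF n], of real] by (simp only: of_nat_mult)
qed

lemma sum_sign_vectors_pos_part:
  assumes "T \<subseteq> {..<m}" and "T \<noteq> {}"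
  shows "(\<Sum>\<sigma>\<in>{..<m} \<rightarrow>\<^sub>E {-1,1::real}. max 0 (\<Sum>t\<in>T. \<sigma> t)) / 2 ^ m =
    1 / 2 ^ card T * real (nat \<lceil>real (card T) / 2\<rceil>) * real (card T choose nat \<lceil>real (card T) / 2\<rceil>)"
proof -
  have finite: "finite T" and card_le: "card T \<le> m"
    using assms(1) finite_subset card_mono[OF _ assms(1)] by auto
  have "{..<m} \<inter> T = T" and "card ({..<m} - T) = m - card T"
    using assms(1) finite by (auto simp: card_Diff_subset)
  then have "(\<Sum>\<sigma>\<in>{..<m} \<rightarrow>\<^sub>E {-1,1::real}. max 0 (\<Sum>t\<in>T. \<sigma> t)) =
      2 ^ (m - card T) * (real (nat \<lceil>real (card T) / 2\<rceil>) * real (card T choose nat \<lceil>real (card T) / 2\<rceil>))"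
    using sum_sign_vectors_binomial[of "{..<m}" "max 0" T] sum_binomial_pos_part[of "card T"]
      assms(2) finite by (simp add: card_gt_0_iff)
  then show ?thesis
    using card_le by (simp add: power_diff)
qed

lemma Sup_sum_signs_indicators:
  fixes \<sigma> :: "nat \<Rightarrow> real" and X :: "nat list"
  defines "m \<equiv> length X"
  shows "Sup {(1 / real m) * (\<Sum>t<m. \<sigma> t * f (X ! t)) | f :: nat \<Rightarrow> real. \<forall>x. f x \<in> {0, 1}} =
    (1 / real m) * (\<Sum>x\<in>set X. max 0 (\<Sum>t | t < m \<and> X ! t = x. \<sigma> t))"
proof -
  let ?S = "\<lambda>x. \<Sum>t | t < m \<and> X ! t = x. \<sigma> t"
  have grouped: "(\<Sum>t<m. \<sigma> t * f (X ! t)) = (\<Sum>x\<in>set X. f x * ?S x)" for f :: "nat \<Rightarrow> real"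
  proof -
    have "(\<Sum>t<m. \<sigma> t * f (X ! t)) = (\<Sum>x\<in>set X. \<Sum>t | t < m \<and> X ! t = x. \<sigma> t * f (X ! t))"
      using sum.group[of "{..<m}" "set X" "(!) X" "\<lambda>t. \<sigma> t * f (X ! t)"]
        by (simp add: m_def image_subset_iff)
    also have "\<dots> = (\<Sum>x\<in>set X. f x * ?S x)"
      by (auto simp: sum_distrib_left mult.commute intro!: sum.cong)
    finally show ?thesis .
  qed
  show ?thesis
  proof (rule cSup_eq_maximum)
    define f where "f x = (if ?S x > 0 then 1 else (0::real))" for x
    have "(1 / real m) * (\<Sum>x\<in>set X. max 0 (?S x)) = (1 / real m) * (\<Sum>t<m. \<sigma> t * f (X ! t))"
      unfolding grouped by (auto simp: f_def intro!: sum.cong)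
    moreover have "\<forall>x. f x \<in> {0, 1}"
      by (simp add: f_def)
    ultimately show "(1 / real m) * (\<Sum>x\<in>set X. max 0 (?S x)) \<in>
        {(1 / real m) * (\<Sum>t<m. \<sigma> t * f (X ! t)) | f :: nat \<Rightarrow> real. \<forall>x. f x \<in> {0, 1}}"
      by blast
  next
    fix y
    assume "y \<in> {(1 / real m) * (\<Sum>t<m. \<sigma> t * f (X ! t)) | f :: nat \<Rightarrow> real. \<forall>x. f x \<in> {0, 1}}"
    then obtain f :: "nat \<Rightarrow> real" where f: "\<forall>x. f x \<in> {0, 1}"
      and y: "y = (1 / real m) * (\<Sum>x\<in>set X. f x * ?S x)"
      by (auto simp: grouped)
    have "f x * ?S x \<le> max 0 (?S x)" for x
      using f[rule_format, of x] by auto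
    then have "(\<Sum>x\<in>set X. f x * ?S x) \<le> (\<Sum>x\<in>set X. max 0 (?S x))"
      by (rule sum_mono)
    then show "y \<le> (1 / real m) * (\<Sum>x\<in>set X. max 0 (?S x))"
      unfolding y by (intro mult_left_mono) auto
  qed
qed

lemma emp_rademacher_eq_sum_pos_parts:
  fixes X :: "nat list"
  defines "m \<equiv> length X"
  shows "emp_rademacher X = 1 / 2 ^ m *
    (\<Sum>\<sigma>\<in>{..<m} \<rightarrow>\<^sub>E {-1,1::real}. (1 / real m) * (\<Sum>x\<in>set X. max 0 (\<Sum>t | t < m \<and> X ! t = x. \<sigma> t)))"
proof -
  have "card ({..<m} \<rightarrow>\<^sub>E {-1,1::real}) = 2 ^ m"
    by (simp add: card_PiE numeral_2_eq_2)
  then show ?thesis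
    unfolding emp_rademacher_def Let_def m_def[symmetric] Sup_sum_signs_indicators[where X = X, folded m_def]
    by simp
qed

lemma count_list_conv_card_nth: "count_list xs x = card {t. t < length xs \<and> xs ! t = x}"
  by (simp add: count_list_eq_length_filter length_filter_conv_card eq_commute)

lemma length_times_emp_measure: "real (length X) * emp_measure X x = real (count_list X x)"
  by (simp add: emp_measure_def count_list_conv_card_nth sum.If_cases Int_def)

theorem lemma4:
  fixes X :: "nat list" and m :: nat
  assumes "length X = m"
  shows "emp_rademacher X =
    (1 / real m) *
      (\<Sum>x\<in>{x. m * emp_measure X x > 0}.
         (let n = nat (round (real m * emp_measure X x)) in
           (1 / 2 ^ n) * real (nat \<lceil>real n / 2\<rceil>) * real (n choose nat \<lceil>real n / 2\<rceil>)))"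
proof -
  define P where "P x = {t. t < m \<and> X ! t = x}" for x
  define c where "c n = 1 / 2 ^ n * real (nat \<lceil>real n / 2\<rceil>) * real (n choose nat \<lceil>real n / 2\<rceil>)" for n
  have card_P: "card (P x) = count_list X x" for x
    by (simp add: P_def count_list_conv_card_nth assms)
  have "emp_rademacher X = (1 / real m) *
      (\<Sum>x\<in>set X. (\<Sum>\<sigma>\<in>{..<m} \<rightarrow>\<^sub>E {-1,1::real}. max 0 (\<Sum>t\<in>P x. \<sigma> t)) / 2 ^ m)"
    by (simp add: emp_rademacher_eq_sum_pos_parts assms P_def sum_distrib_left sum_divide_distrib
        sum.swap[of _ "{..<m} \<rightarrow>\<^sub>E _"] mult.commute)
  also have "\<dots> = (1 / real m) * (\<Sum>x\<in>set X. c (count_list X x))"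
  proof (intro arg_cong[where f = "(*) _"] sum.cong refl)
    fix x assume "x \<in> set X"
    then have "P x \<noteq> {}"
      using card_P[of x] count_list_0_iff[of X x] by (metis card.empty)
    moreover have "P x \<subseteq> {..<m}"
      by (auto simp: P_def)
    ultimately show "(\<Sum>\<sigma>\<in>{..<m} \<rightarrow>\<^sub>E {-1,1::real}. max 0 (\<Sum>t\<in>P x. \<sigma> t)) / 2 ^ m = c (count_list X x)"
      unfolding c_def card_P[symmetric] by (simp add: sum_sign_vectors_pos_part)
  qed
  also have "set X = {x. 0 < count_list X x}"
    by (metis (mono_tags) Collect_mem_eq Collect_cong count_list_0_iff neq0_conv)
  finally show ?thesis
    using length_times_emp_measure[of X] by (simp add: assms c_def Let_def)
qed

end
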